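(* Let $\Omega\subseteq\mathbb{R}^d$ be a compact convex set with non-empty interior, and let $\mu_0,\mu_1$ have Lebesgue densities $p_0,p_1$ supported on $\Omega$ that are continuous, uniformly bounded and bounded away from zero on $\Omega$. Let $X_0\sim\mu_0$, $X_1\sim\mu_1$, and define $$v(t,z)=\begin{cases}\mathbb{E}[X_1]-z,& t=0,\ z\in\Omega,\\ \dfrac{\int_{S_t(z)}\delta\,p_0(z-t\delta)p_1(z+(1-t)\delta)d\delta}{\int_{S_t(z)}p_0(z-t\delta)p_1(z+(1-t)\delta)d\delta},& t\in(0,1),\ z\in\Omega^\circ,\\ z-\mathbb{E}[X_0],& t=1,\ z\in\Omega,\end{cases}$$ where $S_t(z)=\{\delta: z-t\delta\in\Omega,\ z+(1-t)\delta\in\Omega\}$. Then for each $t\in[0,1]$, $z\mapsto v(t,z)$ is continuous on its domain. Additionally, for $t\in(0,1)$, setting $v(t,z)=0$ for $z\in\mathrm{SC}(\Omega)$ gives the unique continuous extension of $z\mapsto v(t,z)$ to $\mathrm{SC}(\Omega)$.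
   Context: For a set $A\subseteq\mathbb{R}^d$ and $a\in A$, the modulus of convexity at $a$ is $\mathfrak m_a(\varepsilon;A)=\inf\{\mathrm{dist}(\frac{a+b}{2},\partial A): b\in A,\ \|a-b\|\ge\varepsilon\}$ for $\varepsilon\in[0,\mathrm{diam}(A)]$, and $\mathrm{SC}(A)=\{a\in\partial A:\mathfrak m_a(\varepsilon;A)>0\text{ for all }\varepsilon\in(0,\mathrm{diam}(A)]\}$ (the boundary points at which $A$ is strictly convex). *)

theory Defs
  imports "HOL-Analysis.Analysis"
begin

text \<open>Modulus of convexity of A at a (extended-real valued, so that the infimum of the
  empty set is +\<infinity>), and the set SC(A) of boundary points of strict convexity.\<close>
definition modconv :: "'a::euclidean_space set \<Rightarrow> 'a \<Rightarrow> real \<Rightarrow> ereal" where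
  "modconv A a \<epsilon> =
     (INF b \<in> {b \<in> A. norm (a - b) \<ge> \<epsilon>}. ereal (infdist ((1/2) *\<^sub>R (a + b)) (frontier A)))"

definition SC :: "'a::euclidean_space set \<Rightarrow> 'a set" where
  "SC A = {a \<in> frontier A. \<forall>\<epsilon>. 0 < \<epsilon> \<and> \<epsilon> \<le> diameter A \<longrightarrow> modconv A a \<epsilon> > 0}"

definition Sset :: "'a::euclidean_space set \<Rightarrow> real \<Rightarrow> 'a \<Rightarrow> 'a set" where
  "Sset \<Omega> t z = {\<delta>. z - t *\<^sub>R \<delta> \<in> \<Omega> \<and> z + (1 - t) *\<^sub>R \<delta> \<in> \<Omega>}"

definition mean :: "('a::euclidean_space \<Rightarrow> real) \<Rightarrow> 'a" where
  "mean p = integral\<^sup>L lborel (\<lambda>x. p x *\<^sub>R x)"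

definition vfield :: "'a::euclidean_space set \<Rightarrow> ('a \<Rightarrow> real) \<Rightarrow> ('a \<Rightarrow> real) \<Rightarrow> real \<Rightarrow> 'a \<Rightarrow> 'a" where
  "vfield \<Omega> p0 p1 t z =
     (if t = 0 then mean p1 - z
      else if t = 1 then z - mean p0
      else (1 / set_lebesgue_integral lborel (Sset \<Omega> t z)
                  (\<lambda>\<delta>. p0 (z - t *\<^sub>R \<delta>) * p1 (z + (1 - t) *\<^sub>R \<delta>)))
           *\<^sub>R set_lebesgue_integral lborel (Sset \<Omega> t z)
                  (\<lambda>\<delta>. (p0 (z - t *\<^sub>R \<delta>) * p1 (z + (1 - t) *\<^sub>R \<delta>)) *\<^sub>R \<delta>))"

end

theory Submission
  imports Defs
begin

text \<open>For 0 < t < 1 the field v(t,z) is the ratio of two parametric integrals over \<delta>. Dominated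
  convergence makes both continuous in z: the integrands are bounded, supported in the ball
  of radius diam \<Omega>, and continuous in z for almost every \<delta>, because the densities are
  continuous off the Lebesgue-null frontier of the convex set \<Omega>. In the interior the
  denominator is positive, so v(t,\<cdot>) is continuous there.

  Near a point a of strict convexity, a supporting hyperplane at a together with the positive
  modulus of convexity shows that two points of \<Omega> at distance \<ge> \<epsilon> cannot both have
  convex combination z close to a; hence every displacement \<delta> contributing to v(t,z) is
  small, and so is v(t,z), a weighted mean of such \<delta>. Uniqueness of the extension is
  density of the interior in the closure of a convex body.\<close>

lemma isCont_integral_dominated:
  fixes F :: "'a::metric_space \<Rightarrow> 'b \<Rightarrow> 'c::{banach, second_countable_topology}"
  assumes meas: "\<And>z. F z \<in> borel_measurable M" and w: "integrable M w"
    and bound: "\<And>z x. norm (F z x) \<le> w x"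
    and cont: "AE x in M. isCont (\<lambda>z. F z x) z0"
  shows "isCont (\<lambda>z. integral\<^sup>L M (F z)) z0"
  unfolding continuous_at_sequentially comp_def
proof (intro allI impI)
  fix zs :: "nat \<Rightarrow> 'a" assume zs: "zs \<longlonglongrightarrow> z0"
  have "AE x in M. (\<lambda>i. F (zs i) x) \<longlonglongrightarrow> F z0 x"
    using cont by eventually_elim (rule isCont_tendsto_compose[OF _ zs])
  then show "(\<lambda>i. integral\<^sup>L M (F (zs i))) \<longlonglongrightarrow> integral\<^sup>L M (F z0)"
    by (rule integral_dominated_convergence[OF meas meas w]) (simp add: bound)
qed

lemma set_lebesgue_integral_eq_integral:
  assumes "\<And>x. x \<notin> A \<Longrightarrow> f x = 0"
  shows "set_lebesgue_integral M A f = integral\<^sup>L M f"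
  unfolding set_lebesgue_integral_def
  by (rule Bochner_Integration.integral_cong) (auto simp: indicator_def assms)

lemma norm_integral_scaleR_le_support_radius:
  fixes f :: "'a::euclidean_space \<Rightarrow> real"
  assumes "integrable M f" "integrable M (\<lambda>x. f x *\<^sub>R x)" "\<And>x. 0 \<le> f x"
    and "\<And>x. f x \<noteq> 0 \<Longrightarrow> norm x \<le> e"
  shows "norm (\<integral>x. f x *\<^sub>R x \<partial>M) \<le> e * (\<integral>x. f x \<partial>M)"
proof -
  have "norm (f x *\<^sub>R x) \<le> e * f x" for x
    using assms(3,4)[of x] by (cases "f x = 0") (auto simp: mult.commute intro: mult_left_mono)
  then have "norm (\<integral>x. f x *\<^sub>R x \<partial>M) \<le> (\<integral>x. e * f x \<partial>M)"
    by (intro Bochner_Integration.integral_norm_bound_integral assms(2) integrable_mult_right assms(1))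
  then show ?thesis by simp
qed

lemma isCont_extension_by_zero:
  fixes p :: "'a::t2_space \<Rightarrow> 'b::real_normed_vector"
  assumes "closed \<Omega>" "continuous_on \<Omega> p" "\<And>x. x \<notin> \<Omega> \<Longrightarrow> p x = 0" "x \<notin> frontier \<Omega>"
  shows "isCont p x"
proof (cases "x \<in> interior \<Omega>")
  case True
  then show ?thesis using assms(2) continuous_on_interior by blast
next
  case False
  then have "x \<in> - \<Omega>" using assms(1,4) by (simp add: frontier_def)
  moreover have "open (- \<Omega>)" using assms(1) by auto
  ultimately have "eventually (\<lambda>y. y \<in> - \<Omega>) (at x)"
    using eventually_at_topological by blast
  then have "eventually (\<lambda>y. p y = p x) (at x)"
    by eventually_elim (use \<open>x \<in> - \<Omega>\<close> assms(3) in auto)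
  then show ?thesis unfolding isCont_def by (rule tendsto_eventually)
qed

lemma continuous_on_eq_on_closure:
  fixes f g :: "'a::topological_space \<Rightarrow> 'b::real_normed_vector"
  assumes "continuous_on D f" "continuous_on D g" "S \<subseteq> D" "D \<subseteq> closure S"
    and "\<And>x. x \<in> S \<Longrightarrow> f x = g x" "x \<in> D"
  shows "f x = g x"
proof -
  have "closedin (top_of_set D) {x \<in> D. f x - g x = 0}"
    by (intro continuous_closedin_preimage_constant continuous_on_diff assms(1,2))
  then obtain C where C: "closed C" "{x \<in> D. f x - g x = 0} = D \<inter> C"
    unfolding closedin_closed by blast
  have "S \<subseteq> C" using C(2) assms(3,5) by auto
  then have "closure S \<subseteq> C" using C(1) by (rule closure_minimal)
  then show ?thesis using C(2) assms(4,6) by auto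
qed

lemma AE_lborel_affine:
  fixes P :: "'a::euclidean_space \<Rightarrow> bool"
  shows "c \<noteq> 0 \<Longrightarrow> Measurable.pred borel P \<Longrightarrow> AE x in lborel. P x \<Longrightarrow> AE x in lborel. P (t + c *\<^sub>R x)"
  by (subst lborel_affine[where t="- (1/c) *\<^sub>R t" and c="1 / c"])
     (simp_all add: AE_density AE_distr_iff field_simps)

lemma null_sets_frontier_convex:
  fixes \<Omega> :: "'a::euclidean_space set"
  assumes "convex \<Omega>"
  shows "frontier \<Omega> \<in> null_sets lborel"
proof -
  have "frontier \<Omega> \<in> null_sets lebesgue"
    using negligible_convex_frontier[OF assms] by (simp add: negligible_iff_null_sets)
  moreover have "frontier \<Omega> \<in> sets lborel" by simp
  ultimately show ?thesis by (simp add: null_sets_completion_iff)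
qed

lemma AE_lborel_affine_notin_frontier_convex:
  fixes \<Omega> :: "'a::euclidean_space set"
  assumes "convex \<Omega>" "c \<noteq> 0"
  shows "AE x in lborel. z + c *\<^sub>R x \<notin> frontier \<Omega>"
proof -
  have [measurable]: "frontier \<Omega> \<in> sets borel" by simp
  have "Measurable.pred borel (\<lambda>x. x \<notin> frontier \<Omega>)" by measurable
  moreover have "AE x in lborel. x \<notin> frontier \<Omega>"
    using null_sets_frontier_convex[OF assms(1)] by (rule AE_not_in)
  ultimately show "AE x in lborel. (\<lambda>y. y \<notin> frontier \<Omega>) (z + c *\<^sub>R x)"
    by (rule AE_lborel_affine[OF assms(2)])
qed

subsection \<open>Geometry near points of strict convexity\<close>

lemma interior_Int_SC: "interior A \<inter> SC A = {}"
  unfolding SC_def frontier_def by blast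

lemma ball_subset_if_le_infdist_frontier:
  fixes \<Omega> :: "'a::euclidean_space set"
  assumes "m \<in> \<Omega>" "\<rho> \<le> infdist m (frontier \<Omega>)"
  shows "ball m \<rho> \<subseteq> \<Omega>"
proof (rule ccontr)
  assume "\<not> ball m \<rho> \<subseteq> \<Omega>"
  then have "ball m \<rho> - \<Omega> \<noteq> {}" by auto
  moreover have "m \<in> ball m \<rho>"
    using \<open>ball m \<rho> - \<Omega> \<noteq> {}\<close> by (metis Diff_empty ball_eq_empty centre_in_ball empty_Diff not_less)
  then have "ball m \<rho> \<inter> \<Omega> \<noteq> {}" using assms(1) by blast
  ultimately obtain f where f: "f \<in> ball m \<rho>" "f \<in> frontier \<Omega>"
    using connected_Int_frontier[OF connected_ball] by blast
  have "infdist m (frontier \<Omega>) \<le> dist m f" using f(2) by (rule infdist_le)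
  with f(1) assms(2) show False by auto
qed

lemma supporting_margin_if_modconv_pos:
  fixes \<Omega> :: "'a::euclidean_space set"
  assumes "convex \<Omega>" "a \<in> \<Omega>" "n \<noteq> 0" "\<And>y. y \<in> \<Omega> \<Longrightarrow> n \<bullet> a \<le> n \<bullet> y"
    and "modconv \<Omega> a \<epsilon> > 0"
  obtains \<rho> where "\<rho> > 0" "\<And>b. b \<in> \<Omega> \<Longrightarrow> \<epsilon> \<le> norm (a - b) \<Longrightarrow> n \<bullet> a + \<rho> \<le> n \<bullet> b"
proof -
  obtain r where r: "0 < ereal r" "ereal r < modconv \<Omega> a \<epsilon>"
    using assms(5) ereal_dense2 by blast
  have "n \<bullet> a + r * norm n \<le> n \<bullet> b" if b: "b \<in> \<Omega>" "\<epsilon> \<le> norm (a - b)" for b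
  proof -
    define m where "m = (1/2) *\<^sub>R (a + b)"
    have "m \<in> \<Omega>"
      using convexD[OF assms(1,2) b(1), of "1/2" "1/2"] by (simp add: m_def scaleR_right_distrib)
    moreover have "modconv \<Omega> a \<epsilon> \<le> ereal (infdist m (frontier \<Omega>))"
      unfolding modconv_def m_def by (rule INF_lower) (use b in auto)
    with r(2) have "ereal r < ereal (infdist m (frontier \<Omega>))" by (rule order.strict_trans2)
    then have "r \<le> infdist m (frontier \<Omega>)" by simp
    ultimately have ball: "ball m r \<subseteq> \<Omega>" by (rule ball_subset_if_le_infdist_frontier)
    \<comment> \<open>a point of that ball on the side of the midpoint facing the supporting hyperplane\<close>
    define y where "y = m - (r / 2 / norm n) *\<^sub>R n"
    have "dist m y < r" using r(1) assms(3) by (simp add: y_def dist_norm)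
    then have "n \<bullet> a \<le> n \<bullet> y" using ball by (intro assms(4)) auto
    moreover have "n \<bullet> y = (n \<bullet> a + n \<bullet> b) / 2 - r * norm n / 2"
      using assms(3) by (simp add: y_def m_def inner_diff_right inner_add_right dot_square_norm power2_eq_square)
    ultimately show ?thesis by argo
  qed
  moreover have "r * norm n > 0" using r(1) assms(3) by simp
  ultimately show ?thesis using that by blast
qed

lemma convex_combination_ge_min_weight:
  fixes t u v \<rho> :: real
  assumes "0 \<le> t" "t \<le> 1" "0 \<le> u" "0 \<le> v" "0 \<le> \<rho>" "\<rho> \<le> u \<or> \<rho> \<le> v"
  shows "min t (1 - t) * \<rho> \<le> (1 - t) * u + t * v"
proof -
  have "min t (1 - t) * \<rho> \<le> (1 - t) * \<rho>" "min t (1 - t) * \<rho> \<le> t * \<rho>"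
    using assms(5) by (simp_all add: mult_right_mono)
  moreover have "(1 - t) * \<rho> \<le> (1 - t) * u" if "\<rho> \<le> u" using that assms(2) by (simp add: mult_left_mono)
  moreover have "t * \<rho> \<le> t * v" if "\<rho> \<le> v" using that assms(1) by (simp add: mult_left_mono)
  moreover have "0 \<le> (1 - t) * u" "0 \<le> t * v" using assms by simp_all
  ultimately show ?thesis using assms(6) by linarith
qed

lemma norm_le_diameter_if_in_Sset:
  assumes "bounded \<Omega>" "\<delta> \<in> Sset \<Omega> t z"
  shows "norm \<delta> \<le> diameter \<Omega>"
proof -
  have "dist (z + (1 - t) *\<^sub>R \<delta>) (z - t *\<^sub>R \<delta>) \<le> diameter \<Omega>"
    using assms by (intro diameter_bounded_bound) (auto simp: Sset_def)
  then show ?thesis by (simp add: dist_norm algebra_simps)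
qed

lemma Sset_small_near_SC:
  fixes \<Omega> :: "'a::euclidean_space set"
  assumes "compact \<Omega>" "convex \<Omega>" "interior \<Omega> \<noteq> {}" "a \<in> SC \<Omega>" "e > 0" "0 < t" "t < 1"
  obtains \<eta> where "\<eta> > 0" "\<And>z \<delta>. dist z a < \<eta> \<Longrightarrow> \<delta> \<in> Sset \<Omega> t z \<Longrightarrow> norm \<delta> < e"
proof (cases "diameter \<Omega> < e")
  case True
  then show ?thesis
    using that[of 1] norm_le_diameter_if_in_Sset compact_imp_bounded[OF assms(1)] by force
next
  case False
  have a: "a \<in> frontier \<Omega>" "modconv \<Omega> a (e/2) > 0"
    using assms(4,5) False by (auto simp: SC_def)
  then have "a \<in> \<Omega>" "a \<notin> rel_interior \<Omega>"
    using compact_imp_closed[OF assms(1)] rel_interior_nonempty_interior[OF assms(3)]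
    by (auto simp: frontier_def)
  then obtain n where n: "n \<noteq> 0" "\<And>y. y \<in> \<Omega> \<Longrightarrow> n \<bullet> a \<le> n \<bullet> y"
    using supporting_hyperplane_relative_frontier[OF assms(2)] closure_subset by (metis subsetD)
  obtain \<rho> where \<rho>: "\<rho> > 0" "\<And>b. b \<in> \<Omega> \<Longrightarrow> e/2 \<le> norm (a - b) \<Longrightarrow> n \<bullet> a + \<rho> \<le> n \<bullet> b"
    using supporting_margin_if_modconv_pos[OF assms(2) \<open>a \<in> \<Omega>\<close> n a(2)] by blast
  show ?thesis
  proof (rule that[of "min t (1 - t) * \<rho> / norm n"])
    show "min t (1 - t) * \<rho> / norm n > 0" using assms(6,7) \<rho>(1) n(1) by simp
    fix z \<delta> assume z: "dist z a < min t (1 - t) * \<rho> / norm n" and "\<delta> \<in> Sset \<Omega> t z"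
    then have x: "z - t *\<^sub>R \<delta> \<in> \<Omega>" "z + (1 - t) *\<^sub>R \<delta> \<in> \<Omega>" by (auto simp: Sset_def)
    show "norm \<delta> < e"
    proof (rule ccontr)
      assume "\<not> norm \<delta> < e"
      moreover have "norm \<delta> \<le> norm (a - (z - t *\<^sub>R \<delta>)) + norm (a - (z + (1 - t) *\<^sub>R \<delta>))"
        using norm_triangle_ineq4[of "a - (z - t *\<^sub>R \<delta>)" "a - (z + (1 - t) *\<^sub>R \<delta>)"]
        by (simp add: algebra_simps)
      ultimately have "e/2 \<le> norm (a - (z - t *\<^sub>R \<delta>)) \<or> e/2 \<le> norm (a - (z + (1 - t) *\<^sub>R \<delta>))"
        by linarith
      then have "\<rho> \<le> n \<bullet> (z - t *\<^sub>R \<delta>) - n \<bullet> a \<or> \<rho> \<le> n \<bullet> (z + (1 - t) *\<^sub>R \<delta>) - n \<bullet> a"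
        using \<rho>(2)[OF x(1)] \<rho>(2)[OF x(2)] by auto
      then have "min t (1 - t) * \<rho> \<le> (1 - t) * (n \<bullet> (z - t *\<^sub>R \<delta>) - n \<bullet> a) + t * (n \<bullet> (z + (1 - t) *\<^sub>R \<delta>) - n \<bullet> a)"
        using \<rho>(1) n(2)[OF x(1)] n(2)[OF x(2)] assms(6,7)
        by (intro convex_combination_ge_min_weight) auto
      also have "\<dots> = n \<bullet> (z - a)"
        by (simp add: inner_diff_right inner_add_right algebra_simps)
      also have "\<dots> \<le> norm n * dist z a"
        using norm_cauchy_schwarz[of n "z - a"] by (simp add: dist_norm)
      also have "\<dots> < min t (1 - t) * \<rho>"
        using z n(1) by (simp add: field_simps)
      finally show False by simp
    qed
  qed
qed

subsection \<open>The integrals defining the velocity field\<close>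

text \<open>The joint density of (X_0, X_1) at the pair with X_1 - X_0 = \<delta> whose
  interpolant (1 - t) X_0 + t X_1 is z.\<close>
definition bridge_density :: "('a::real_vector \<Rightarrow> real) \<Rightarrow> ('a \<Rightarrow> real) \<Rightarrow> real \<Rightarrow> 'a \<Rightarrow> 'a \<Rightarrow> real" where
  "bridge_density p0 p1 t z \<delta> = p0 (z - t *\<^sub>R \<delta>) * p1 (z + (1 - t) *\<^sub>R \<delta>)"

locale bounded_density_pair =
  fixes \<Omega> :: "'a::euclidean_space set" and p0 p1 :: "'a \<Rightarrow> real" and M0 M1 :: real
  assumes \<Omega>_compact: "compact \<Omega>" and \<Omega>_convex: "convex \<Omega>"
    and p0_outside: "\<And>x. x \<notin> \<Omega> \<Longrightarrow> p0 x = 0" and p1_outside: "\<And>x. x \<notin> \<Omega> \<Longrightarrow> p1 x = 0"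
    and p0_nonneg: "\<And>x. 0 \<le> p0 x" and p1_nonneg: "\<And>x. 0 \<le> p1 x"
    and p0_le: "\<And>x. p0 x \<le> M0" and p1_le: "\<And>x. p1 x \<le> M1"
    and p0_cont: "continuous_on \<Omega> p0" and p1_cont: "continuous_on \<Omega> p1"
    and p0_meas [measurable]: "p0 \<in> borel_measurable borel"
    and p1_meas [measurable]: "p1 \<in> borel_measurable borel"
begin

lemma \<Omega>_closed: "closed \<Omega>"
  using \<Omega>_compact by (rule compact_imp_closed)

lemma M0_nonneg: "0 \<le> M0"
  using p0_nonneg p0_le by (rule order_trans)

lemma M1_nonneg: "0 \<le> M1"
  using p1_nonneg p1_le by (rule order_trans)

lemma bridge_density_nonneg: "0 \<le> bridge_density p0 p1 t z \<delta>"
  by (simp add: bridge_density_def p0_nonneg p1_nonneg)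

lemma bridge_density_le: "bridge_density p0 p1 t z \<delta> \<le> M0 * M1"
  unfolding bridge_density_def by (intro mult_mono p0_le p1_le p1_nonneg M0_nonneg)

lemma bridge_density_eq_0: "\<delta> \<notin> Sset \<Omega> t z \<Longrightarrow> bridge_density p0 p1 t z \<delta> = 0"
  by (auto simp: bridge_density_def Sset_def p0_outside p1_outside)

lemma borel_measurable_bridge_density [measurable]:
  "bridge_density p0 p1 t z \<in> borel_measurable borel"
  unfolding bridge_density_def by measurable

lemma vfield_eq_integral_ratio:
  assumes "0 < t" "t < 1"
  shows "vfield \<Omega> p0 p1 t z =
    (1 / (\<integral>\<delta>. bridge_density p0 p1 t z \<delta> \<partial>lborel)) *\<^sub>R (\<integral>\<delta>. bridge_density p0 p1 t z \<delta> *\<^sub>R \<delta> \<partial>lborel)"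
  using assms
  by (simp add: vfield_def bridge_density_def[symmetric] set_lebesgue_integral_eq_integral bridge_density_eq_0)

lemma bridge_density_scaleR_dominated:
  fixes h :: "'a \<Rightarrow> 'b::{banach, second_countable_topology}"
  assumes "continuous_on UNIV h"
  obtains w where "integrable lborel w" "\<And>z \<delta>. norm (bridge_density p0 p1 t z \<delta> *\<^sub>R h \<delta>) \<le> w \<delta>"
proof -
  define R where "R = diameter \<Omega>"
  obtain B where "\<forall>y \<in> h ` cball 0 R. norm y \<le> B"
    using compact_imp_bounded[OF compact_continuous_image[OF continuous_on_subset[OF assms] compact_cball]]
    unfolding bounded_iff by blast
  then have B: "\<And>\<delta>. \<delta> \<in> cball 0 R \<Longrightarrow> norm (h \<delta>) \<le> B" by blast
  have "0 \<in> cball 0 R"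
    using diameter_ge_0[OF compact_imp_bounded[OF \<Omega>_compact]] by (simp add: R_def)
  then have "0 \<le> B" using B norm_ge_zero order_trans by blast
  have "norm (bridge_density p0 p1 t z \<delta> *\<^sub>R h \<delta>) \<le> M0 * M1 * B * indicator (cball 0 R) \<delta>" for z \<delta>
  proof (cases "\<delta> \<in> Sset \<Omega> t z")
    case True
    then have "\<delta> \<in> cball 0 R"
      using norm_le_diameter_if_in_Sset compact_imp_bounded[OF \<Omega>_compact] by (simp add: R_def)
    have "norm (bridge_density p0 p1 t z \<delta> *\<^sub>R h \<delta>) = bridge_density p0 p1 t z \<delta> * norm (h \<delta>)"
      using bridge_density_nonneg by simp
    also have "\<dots> \<le> M0 * M1 * B"
      using bridge_density_le bridge_density_nonneg B[OF \<open>\<delta> \<in> cball 0 R\<close>] M0_nonneg M1_nonneg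
      by (intro mult_mono) auto
    finally show ?thesis using \<open>\<delta> \<in> cball 0 R\<close> by simp
  qed (simp add: bridge_density_eq_0 M0_nonneg M1_nonneg \<open>0 \<le> B\<close>)
  moreover have "integrable lborel (\<lambda>\<delta>::'a. M0 * M1 * B * indicator (cball 0 R) \<delta>)"
    by (intro integrable_mult_right integrable_real_indicator) (use emeasure_lborel_cball_finite[of "0::'a" R] in auto)
  ultimately show ?thesis using that by blast
qed

lemma integrable_bridge_density_scaleR:
  fixes h :: "'a \<Rightarrow> 'b::{banach, second_countable_topology}"
  assumes "continuous_on UNIV h"
  shows "integrable lborel (\<lambda>\<delta>. bridge_density p0 p1 t z \<delta> *\<^sub>R h \<delta>)"
proof -
  obtain w where w: "integrable lborel w" "\<And>z \<delta>. norm (bridge_density p0 p1 t z \<delta> *\<^sub>R h \<delta>) \<le> w \<delta>"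
    using bridge_density_scaleR_dominated[OF assms] by blast
  have [measurable]: "h \<in> borel_measurable borel" using assms by (rule borel_measurable_continuous_onI)
  show ?thesis
  proof (rule Bochner_Integration.integrable_bound[OF w(1)])
    show "(\<lambda>\<delta>. bridge_density p0 p1 t z \<delta> *\<^sub>R h \<delta>) \<in> borel_measurable lborel" by measurable
    show "AE \<delta> in lborel. norm (bridge_density p0 p1 t z \<delta> *\<^sub>R h \<delta>) \<le> norm (w \<delta>)"
      by (rule AE_I2, rule order_trans[OF w(2)]) simp
  qed
qed

lemma isCont_integral_bridge_density_scaleR:
  fixes h :: "'a \<Rightarrow> 'b::{banach, second_countable_topology}"
  assumes "continuous_on UNIV h" "0 < t" "t < 1"
  shows "isCont (\<lambda>z. \<integral>\<delta>. bridge_density p0 p1 t z \<delta> *\<^sub>R h \<delta> \<partial>lborel) z0"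
proof -
  obtain w where w: "integrable lborel w" "\<And>z \<delta>. norm (bridge_density p0 p1 t z \<delta> *\<^sub>R h \<delta>) \<le> w \<delta>"
    using bridge_density_scaleR_dominated[OF assms(1)] by blast
  have [measurable]: "h \<in> borel_measurable borel" using assms(1) by (rule borel_measurable_continuous_onI)
  have "AE \<delta> in lborel. z0 - t *\<^sub>R \<delta> \<notin> frontier \<Omega>"
    using AE_lborel_affine_notin_frontier_convex[OF \<Omega>_convex, of "- t" z0] assms(2) by simp
  moreover have "AE \<delta> in lborel. z0 + (1 - t) *\<^sub>R \<delta> \<notin> frontier \<Omega>"
    using assms(3) by (intro AE_lborel_affine_notin_frontier_convex \<Omega>_convex) simp
  ultimately have "AE \<delta> in lborel. isCont (\<lambda>z. bridge_density p0 p1 t z \<delta> *\<^sub>R h \<delta>) z0"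
  proof eventually_elim
    case (elim \<delta>)
    have "isCont p0 (z0 - t *\<^sub>R \<delta>)"
      using elim(1) by (intro isCont_extension_by_zero[OF \<Omega>_closed p0_cont p0_outside])
    with continuous_diff[OF continuous_ident continuous_const]
    have "isCont (\<lambda>z. p0 (z - t *\<^sub>R \<delta>)) z0" by (rule isCont_o2)
    moreover have "isCont p1 (z0 + (1 - t) *\<^sub>R \<delta>)"
      using elim(2) by (intro isCont_extension_by_zero[OF \<Omega>_closed p1_cont p1_outside])
    with continuous_add[OF continuous_ident continuous_const]
    have "isCont (\<lambda>z. p1 (z + (1 - t) *\<^sub>R \<delta>)) z0" by (rule isCont_o2)
    ultimately show ?case unfolding bridge_density_def by (intro continuous_intros)
  qed
  moreover have "(\<lambda>\<delta>. bridge_density p0 p1 t z \<delta> *\<^sub>R h \<delta>) \<in> borel_measurable lborel" for z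
    by measurable
  ultimately show ?thesis
    using isCont_integral_dominated[where F = "\<lambda>z \<delta>. bridge_density p0 p1 t z \<delta> *\<^sub>R h \<delta>", OF _ w] by blast
qed

lemma integrable_bridge_density: "integrable lborel (bridge_density p0 p1 t z)"
  using integrable_bridge_density_scaleR[of "\<lambda>_. 1::real"] by simp

lemma isCont_integral_bridge_density:
  "0 < t \<Longrightarrow> t < 1 \<Longrightarrow> isCont (\<lambda>z. \<integral>\<delta>. bridge_density p0 p1 t z \<delta> \<partial>lborel) z0"
  using isCont_integral_bridge_density_scaleR[of "\<lambda>_. 1::real"] by simp

end

locale density_pair_bounded_below = bounded_density_pair +
  fixes c0 c1 :: real
  assumes interior_nonempty: "interior \<Omega> \<noteq> {}"
    and c0_pos: "0 < c0" and c1_pos: "0 < c1"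
    and p0_ge: "\<And>x. x \<in> \<Omega> \<Longrightarrow> c0 \<le> p0 x" and p1_ge: "\<And>x. x \<in> \<Omega> \<Longrightarrow> c1 \<le> p1 x"
begin

lemma integral_bridge_density_pos:
  assumes "z \<in> interior \<Omega>" "0 < t" "t < 1"
  shows "0 < (\<integral>\<delta>. bridge_density p0 p1 t z \<delta> \<partial>lborel)"
proof -
  obtain r where r: "r > 0" "ball z r \<subseteq> \<Omega>" using assms(1) mem_interior by blast
  have lower: "c0 * c1 * indicator (ball 0 r) \<delta> \<le> bridge_density p0 p1 t z \<delta>" for \<delta> :: 'a
  proof (cases "\<delta> \<in> ball 0 r")
    case True
    moreover have "t * norm \<delta> \<le> norm \<delta>" "(1 - t) * norm \<delta> \<le> norm \<delta>"
      using assms(2,3) by (simp_all add: mult_left_le_one_le)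
    ultimately have "t * norm \<delta> < r" "(1 - t) * norm \<delta> < r" by simp_all
    then have "z - t *\<^sub>R \<delta> \<in> ball z r" "z + (1 - t) *\<^sub>R \<delta> \<in> ball z r"
      using assms(2,3) by (simp_all add: dist_norm)
    then have "z - t *\<^sub>R \<delta> \<in> \<Omega>" "z + (1 - t) *\<^sub>R \<delta> \<in> \<Omega>" using r(2) by blast+
    then show ?thesis
      using True c1_pos by (auto simp: bridge_density_def intro!: mult_mono p0_ge p1_ge p0_nonneg)
  qed (simp add: bridge_density_nonneg)
  have "(\<integral>\<delta>. c0 * c1 * indicator (ball (0::'a) r) \<delta> \<partial>lborel) \<le> (\<integral>\<delta>. bridge_density p0 p1 t z \<delta> \<partial>lborel)"
    by (intro Bochner_Integration.integral_mono integrable_bridge_density integrable_mult_right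
        integrable_real_indicator lower) (use emeasure_lborel_ball_finite[of "0::'a" r] in auto)
  moreover have "0 < (\<integral>\<delta>. c0 * c1 * indicator (ball (0::'a) r) \<delta> \<partial>lborel)"
    using content_ball_pos[OF r(1)] c0_pos c1_pos by simp
  ultimately show ?thesis by linarith
qed

lemma isCont_vfield:
  assumes "z \<in> interior \<Omega>" "0 < t" "t < 1"
  shows "isCont (vfield \<Omega> p0 p1 t) z"
proof -
  have "vfield \<Omega> p0 p1 t = (\<lambda>z. (1 / (\<integral>\<delta>. bridge_density p0 p1 t z \<delta> \<partial>lborel)) *\<^sub>R
                                    (\<integral>\<delta>. bridge_density p0 p1 t z \<delta> *\<^sub>R \<delta> \<partial>lborel))"
    using vfield_eq_integral_ratio[OF assms(2,3)] by (rule ext)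
  moreover have "(\<integral>\<delta>. bridge_density p0 p1 t z \<delta> \<partial>lborel) \<noteq> 0"
    using integral_bridge_density_pos[OF assms] by simp
  moreover have "isCont (\<lambda>z. \<integral>\<delta>. bridge_density p0 p1 t z \<delta> \<partial>lborel) z"
    using assms(2,3) by (rule isCont_integral_bridge_density)
  moreover have "isCont (\<lambda>z. \<integral>\<delta>. bridge_density p0 p1 t z \<delta> *\<^sub>R \<delta> \<partial>lborel) z"
    using assms(2,3) by (intro isCont_integral_bridge_density_scaleR continuous_on_id)
  ultimately show ?thesis by (auto intro: continuous_intros)
qed

lemma vfield_small_near_SC:
  assumes "a \<in> SC \<Omega>" "e > 0" "0 < t" "t < 1"
  obtains \<eta> where "\<eta> > 0" "\<And>y. y \<in> interior \<Omega> \<Longrightarrow> dist y a < \<eta> \<Longrightarrow> norm (vfield \<Omega> p0 p1 t y) \<le> e"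
proof -
  obtain \<eta> where \<eta>: "\<eta> > 0" "\<And>z \<delta>. dist z a < \<eta> \<Longrightarrow> \<delta> \<in> Sset \<Omega> t z \<Longrightarrow> norm \<delta> < e"
    using Sset_small_near_SC[OF \<Omega>_compact \<Omega>_convex interior_nonempty assms] by blast
  have "norm (vfield \<Omega> p0 p1 t y) \<le> e" if y: "y \<in> interior \<Omega>" "dist y a < \<eta>" for y
  proof -
    \<comment> \<open>v(t,y) is a weighted mean of displacements \<delta> of norm < e\<close>
    have "norm (\<integral>\<delta>. bridge_density p0 p1 t y \<delta> *\<^sub>R \<delta> \<partial>lborel) \<le> e * (\<integral>\<delta>. bridge_density p0 p1 t y \<delta> \<partial>lborel)"
    proof (rule norm_integral_scaleR_le_support_radius)
      show "norm \<delta> \<le> e" if "bridge_density p0 p1 t y \<delta> \<noteq> 0" for \<delta>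
        using \<eta>(2)[OF y(2)] bridge_density_eq_0 that by (meson less_imp_le)
    qed (use integrable_bridge_density integrable_bridge_density_scaleR[of "\<lambda>\<delta>. \<delta>"] bridge_density_nonneg in auto)
    moreover have "0 < (\<integral>\<delta>. bridge_density p0 p1 t y \<delta> \<partial>lborel)"
      using integral_bridge_density_pos[OF y(1) assms(3,4)] .
    ultimately show ?thesis
      using vfield_eq_integral_ratio[OF assms(3,4)] by (simp add: pos_divide_le_eq mult.commute)
  qed
  then show ?thesis using that \<eta>(1) by blast
qed

lemma continuous_on_vfield_zero_on_SC:
  assumes "0 < t" "t < 1"
  shows "continuous_on (interior \<Omega> \<union> SC \<Omega>) (\<lambda>z. if z \<in> SC \<Omega> then 0 else vfield \<Omega> p0 p1 t z)"
    (is "continuous_on ?D ?w")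
proof -
  have "continuous (at z within ?D) ?w" if "z \<in> ?D" for z
  proof (cases "z \<in> interior \<Omega>")
    case True
    have "continuous_on (interior \<Omega>) (vfield \<Omega> p0 p1 t)"
      using isCont_vfield[OF _ assms] by (intro continuous_at_imp_continuous_on) blast
    then have "continuous_on (interior \<Omega>) ?w"
      by (rule continuous_on_eq) (use interior_Int_SC in auto)
    then have "isCont ?w z"
      using True continuous_on_eq_continuous_at[OF open_interior] by blast
    then show ?thesis by (rule continuous_at_imp_continuous_at_within)
  next
    case False
    then have "z \<in> SC \<Omega>" using that by blast
    show ?thesis
      unfolding continuous_within_eps_delta
    proof (intro allI impI)
      fix e :: real assume "e > 0"
      then have "e/2 > 0" by simp
      then obtain \<eta> where \<eta>: "\<eta> > 0"
        "\<And>y. y \<in> interior \<Omega> \<Longrightarrow> dist y z < \<eta> \<Longrightarrow> norm (vfield \<Omega> p0 p1 t y) \<le> e/2"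
        using vfield_small_near_SC[OF \<open>z \<in> SC \<Omega>\<close> _ assms] by blast
      have "dist (?w y) (?w z) < e" if "y \<in> ?D" "dist y z < \<eta>" for y
      proof (cases "y \<in> SC \<Omega>")
        case False
        then have "norm (vfield \<Omega> p0 p1 t y) \<le> e/2" using that \<eta>(2) by blast
        then show ?thesis using False \<open>z \<in> SC \<Omega>\<close> \<open>e > 0\<close> by simp
      qed (use \<open>z \<in> SC \<Omega>\<close> \<open>e > 0\<close> in simp)
      then show "\<exists>d>0. \<forall>y\<in>?D. dist y z < d \<longrightarrow> dist (?w y) (?w z) < e"
        using \<eta>(1) by blast
    qed
  qed
  then show ?thesis unfolding continuous_on_eq_continuous_within by blast
qed

lemma vfield_zero_on_SC_extension_unique:
  assumes "0 < t" "t < 1" and g: "continuous_on (interior \<Omega> \<union> SC \<Omega>) g"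
    "\<And>z. z \<in> interior \<Omega> \<Longrightarrow> g z = vfield \<Omega> p0 p1 t z"
    and "z \<in> interior \<Omega> \<union> SC \<Omega>"
  shows "g z = (if z \<in> SC \<Omega> then 0 else vfield \<Omega> p0 p1 t z)"
proof (rule continuous_on_eq_on_closure[OF g(1) continuous_on_vfield_zero_on_SC[OF assms(1,2)]])
  have "SC \<Omega> \<subseteq> closure \<Omega>" unfolding SC_def frontier_def by blast
  then show "interior \<Omega> \<union> SC \<Omega> \<subseteq> closure (interior \<Omega>)"
    using convex_closure_interior[OF \<Omega>_convex interior_nonempty] closure_subset by blast
qed (use g(2) interior_Int_SC assms(5) in auto)

end

theorem proposition6:
  fixes \<Omega> :: "'a::euclidean_space set" and p0 p1 :: "'a \<Rightarrow> real"
  assumes "compact \<Omega>" and "convex \<Omega>" and "interior \<Omega> \<noteq> {}"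
    and "\<And>x. x \<notin> \<Omega> \<Longrightarrow> p0 x = 0" and "\<And>x. x \<notin> \<Omega> \<Longrightarrow> p1 x = 0"
    and "\<And>x. p0 x \<ge> 0" and "\<And>x. p1 x \<ge> 0"
    and "has_bochner_integral lborel p0 1" and "has_bochner_integral lborel p1 1"
    and "continuous_on \<Omega> p0" and "continuous_on \<Omega> p1"
    and "\<exists>M. \<forall>x\<in>\<Omega>. p0 x \<le> M" and "\<exists>M. \<forall>x\<in>\<Omega>. p1 x \<le> M"
    and "\<exists>c>0. \<forall>x\<in>\<Omega>. p0 x \<ge> c" and "\<exists>c>0. \<forall>x\<in>\<Omega>. p1 x \<ge> c"
  shows "continuous_on \<Omega> (vfield \<Omega> p0 p1 0)
    \<and> continuous_on \<Omega> (vfield \<Omega> p0 p1 1)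
    \<and> (\<forall>t. 0 < t \<and> t < 1 \<longrightarrow> continuous_on (interior \<Omega>) (vfield \<Omega> p0 p1 t))
    \<and> (\<forall>t. 0 < t \<and> t < 1 \<longrightarrow>
         (let D = interior \<Omega> \<union> SC \<Omega>;
              w = (\<lambda>z. if z \<in> SC \<Omega> then 0 else vfield \<Omega> p0 p1 t z)
          in continuous_on D w
             \<and> (\<forall>g. continuous_on D g \<and> (\<forall>z\<in>interior \<Omega>. g z = vfield \<Omega> p0 p1 t z)
                    \<longrightarrow> (\<forall>z\<in>D. g z = w z))))"
proof -
  obtain M0 M1 where M: "\<forall>x\<in>\<Omega>. p0 x \<le> M0" "\<forall>x\<in>\<Omega>. p1 x \<le> M1"
    using assms(12,13) by blast
  obtain c0 c1 where c: "0 < c0" "\<forall>x\<in>\<Omega>. c0 \<le> p0 x" "0 < c1" "\<forall>x\<in>\<Omega>. c1 \<le> p1 x"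
    using assms(14,15) by blast
  have "p0 \<in> borel_measurable borel" "p1 \<in> borel_measurable borel"
    using assms(8,9) by (auto simp: has_bochner_integral_iff)
  then interpret density_pair_bounded_below \<Omega> p0 p1 "max M0 0" "max M1 0" c0 c1
  proof unfold_locales
    show "p0 x \<le> max M0 0" for x using M(1) assms(4)[of x] by (cases "x \<in> \<Omega>") auto
    show "p1 x \<le> max M1 0" for x using M(2) assms(5)[of x] by (cases "x \<in> \<Omega>") auto
  qed (use assms c in auto)
  have "continuous_on \<Omega> (vfield \<Omega> p0 p1 0)" "continuous_on \<Omega> (vfield \<Omega> p0 p1 1)"
    by (simp_all add: vfield_def continuous_intros)
  moreover have "continuous_on (interior \<Omega>) (vfield \<Omega> p0 p1 t)" if "0 < t" "t < 1" for t
    using isCont_vfield[OF _ that] by (intro continuous_at_imp_continuous_on) blast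
  ultimately show ?thesis
    using continuous_on_vfield_zero_on_SC vfield_zero_on_SC_extension_unique unfolding Let_def by blast
qed

end
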